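(* Let $v\in V^X$ with $I(v)=J_\ell$ for some $\ell\in\{1,\dots,N-1\}$, let $k\in\mathbb{N}$ and $i\in\Pi$, and suppose there exists $c\in\mathbb{N}$ such that $\sup\{\mathrm{Cost}_i(\rho)\mid\rho\in\Lambda^k(v)\}=c$. Then $c\le\mathcal{O}\big(|V|^{(|V|+3)(|\Pi|+2)}\big)$.
   Context: Let $\mathcal{G}$ be a quantitative reachability game on an arena $G=(\Pi,V,(V_i)_{i\in\Pi},E)$ (finite player set $\Pi$, finite vertex set $V$ with $|V|\ge2$, $|\Pi|\le|V|$, partition $(V_i)$, every vertex has a successor) with targets $F_i\subseteq V$ and costs $\mathrm{Cost}_i(\rho)=$ least $k$ with $\rho_k\in F_i$ (or $+\infty$); $v_0\in V$. Extended game: arena $X$ with vertices $V^X=V\times2^\Pi$, edges $((v,I),(v',I'))\in E^X$ iff $(v,v')\in E$ and $I'=I\cup\{i:v'\in F_i\}$, $(v,I)\in V^X_i$ iff $v\in V_i$, targets $F^X_i=\{(v,I):i\in I\}$ with corresponding reachability costs $\mathrm{Cost}_i$; $x_0=(v_0,\{i:v_0\in F_i\})$; $I(u)$ is the second component. $\mathcal{I}$ is the set of $I$ with some $(v,I)$ reachable from $x_0$, $N=|\mathcal{I}|$, $J_1<\dots<J_N$ a fixed total order of $\mathcal{I}$ extending $I<I'$ iff $I\ne I'$ and some $(v',I')$ is reachable from some $(v,I)$. $V^{\ge J_n}=\{(v,J_m):v\in V,m\ge n\}$. Labelings: for $\lambda:V^X\to\mathbb{N}\cup\{+\infty\}$,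 a play $\rho$ of $X$ is $\lambda$-consistent if $\mathrm{Cost}_i(\rho_{\ge n})\le\lambda(\rho_n)$ whenever $\rho_n\in V^X_i$. $\lambda^0(u)=0$ if $u\in V^X_i$ and $i\in I(u)$, else $+\infty$. The update of $\lambda^k$ w.r.t. $V^{\ge J_n}$ keeps values outside $V^{\ge J_n}$ and for $u\in V^{\ge J_n}\cap V^X_i$ sets $\lambda^{k+1}(u)=0$ if $i\in I(u)$, otherwise $1+\min_{(u,u')\in E^X}\sup\{\mathrm{Cost}_i(\rho):\rho\in\Lambda^k(u')\}$ ($1+(+\infty)=+\infty$). The sequence is generated by $n_0=N$, $\lambda^{k+1}=$ update of $\lambda^k$ w.r.t. $V^{\ge J_{n_k}}$, $n_{k+1}=n_k-1$ if $\lambda^{k+1}=\lambda^k$ and $n_k>1$, else $n_{k+1}=n_k$. $\Lambda^k(v)$ is the set of $\lambda^k$-consistent plays from $v$. The $\mathcal{O}$ is with respect to the game parameters $|V|,|\Pi|$. *)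

theory Defs
  imports Main "HOL-Library.Extended_Nat"
begin

record ('p, 'v) game =
  players :: "'p set"
  verts   :: "'v set"
  edges   :: "('v \<times> 'v) set"
  owner   :: "'v \<Rightarrow> 'p"
  target  :: "'p \<Rightarrow> 'v set"

definition wf_game :: "('p, 'v) game \<Rightarrow> bool" where
  "wf_game G \<longleftrightarrow>
     finite (players G) \<and> finite (verts G) \<and> card (verts G) \<ge> 2 \<and>
     card (players G) \<le> card (verts G) \<and>
     (\<forall>v \<in> verts G. owner G v \<in> players G) \<and>
     edges G \<subseteq> verts G \<times> verts G \<and>
     (\<forall>v \<in> verts G. \<exists>v'. (v, v') \<in> edges G) \<and>
     (\<forall>i \<in> players G. target G i \<subseteq> verts G)"

type_synonym ('p, 'v) xvert = "'v \<times> 'p set"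

definition XV :: "('p, 'v) game \<Rightarrow> ('p, 'v) xvert set" where
  "XV G = {(v, I). v \<in> verts G \<and> I \<subseteq> players G}"

definition XE :: "('p, 'v) game \<Rightarrow> (('p, 'v) xvert \<times> ('p, 'v) xvert) set" where
  "XE G = {((v, I), (v', I')). (v, v') \<in> edges G \<and> I \<subseteq> players G \<and>
             I' = I \<union> {i \<in> players G. v' \<in> target G i}}"

definition x0 :: "('p, 'v) game \<Rightarrow> 'v \<Rightarrow> ('p, 'v) xvert" where
  "x0 G v0 = (v0, {i \<in> players G. v0 \<in> target G i})"

definition is_play :: "('p, 'v) game \<Rightarrow> (nat \<Rightarrow> ('p, 'v) xvert) \<Rightarrow> bool" where
  "is_play G \<rho> \<longleftrightarrow> (\<forall>n. (\<rho> n, \<rho> (Suc n)) \<in> XE G)"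

definition costX :: "'p \<Rightarrow> (nat \<Rightarrow> ('p, 'v) xvert) \<Rightarrow> enat" where
  "costX i \<rho> = (if \<exists>n. i \<in> snd (\<rho> n) then enat (LEAST n. i \<in> snd (\<rho> n)) else \<infinity>)"

definition consistent :: "('p, 'v) game \<Rightarrow> (('p, 'v) xvert \<Rightarrow> enat) \<Rightarrow> (nat \<Rightarrow> ('p, 'v) xvert) \<Rightarrow> bool" where
  "consistent G lam \<rho> \<longleftrightarrow>
     (\<forall>n. costX (owner G (fst (\<rho> n))) (\<lambda>m. \<rho> (n + m)) \<le> lam (\<rho> n))"

definition Lam :: "('p, 'v) game \<Rightarrow> (('p, 'v) xvert \<Rightarrow> enat) \<Rightarrow> ('p, 'v) xvert \<Rightarrow> (nat \<Rightarrow> ('p, 'v) xvert) set" where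
  "Lam G lam u = {\<rho>. is_play G \<rho> \<and> \<rho> 0 = u \<and> consistent G lam \<rho>}"

definition lab0 :: "('p, 'v) game \<Rightarrow> ('p, 'v) xvert \<Rightarrow> enat" where
  "lab0 G u = (if u \<in> XV G \<and> owner G (fst u) \<in> snd u then 0 else \<infinity>)"

definition ge_set :: "('p, 'v) game \<Rightarrow> (nat \<Rightarrow> 'p set) \<Rightarrow> nat \<Rightarrow> nat \<Rightarrow> ('p, 'v) xvert set" where
  "ge_set G J N n = {(v, J m) | v m. v \<in> verts G \<and> n \<le> m \<and> m \<le> N}"

definition update :: "('p, 'v) game \<Rightarrow> (nat \<Rightarrow> 'p set) \<Rightarrow> nat \<Rightarrow> nat \<Rightarrow>
    (('p, 'v) xvert \<Rightarrow> enat) \<Rightarrow> ('p, 'v) xvert \<Rightarrow> enat" where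
  "update G J N n lam u =
     (if u \<in> ge_set G J N n \<and> u \<in> XV G then
        (if owner G (fst u) \<in> snd u then 0
         else 1 + (INF u' \<in> {u'. (u, u') \<in> XE G}.
                     Sup (costX (owner G (fst u)) ` Lam G lam u')))
      else lam u)"

primrec labseq :: "('p, 'v) game \<Rightarrow> (nat \<Rightarrow> 'p set) \<Rightarrow> nat \<Rightarrow> nat \<Rightarrow>
    (('p, 'v) xvert \<Rightarrow> enat) \<times> nat" where
  "labseq G J N 0 = (lab0 G, N)"
| "labseq G J N (Suc k) =
     (let lam = fst (labseq G J N k); n = snd (labseq G J N k);
          lam' = update G J N n lam
      in (lam', if lam' = lam \<and> n > 1 then n - 1 else n))"

definition Iset :: "('p, 'v) game \<Rightarrow> 'v \<Rightarrow> 'p set set" where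
  "Iset G v0 = {snd u | u. (x0 G v0, u) \<in> (XE G)\<^sup>*}"

definition reach_lt :: "('p, 'v) game \<Rightarrow> 'p set \<Rightarrow> 'p set \<Rightarrow> bool" where
  "reach_lt G I I' \<longleftrightarrow> I \<noteq> I' \<and>
     (\<exists>v v'. (v, I) \<in> XV G \<and> ((v, I), (v', I')) \<in> (XE G)\<^sup>*)"

definition valid_order :: "('p, 'v) game \<Rightarrow> 'v \<Rightarrow> (nat \<Rightarrow> 'p set) \<Rightarrow> bool" where
  "valid_order G v0 J \<longleftrightarrow>
     bij_betw J {1..card (Iset G v0)} (Iset G v0) \<and>
     (\<forall>a \<in> {1..card (Iset G v0)}. \<forall>b \<in> {1..card (Iset G v0)}.
        reach_lt G (J a) (J b) \<longrightarrow> a < b)"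

end

theory Submission
  imports Defs Complex_Main
begin

(* Write n = |V| and p = |Pi|, and call labels above I those of vertices (v, I') with I <= I'
   whose owner is not in I'. If every lambda-consistent play from x reaches F_j and the finite
   labels above I(x) are at most M, then every such play reaches F_j within |Pi - I(x)| (n + M)
   steps. Otherwise its set I stays constant for n + M steps; a vertex repeats among the first
   n + 1 of them, and looping on that cycle gives a lambda-consistent play avoiding F_j: each
   promise made along it falls due within M steps, where I has not changed yet, so it is kept on
   the loop as well.

   The labelings only decrease, so a label becomes finite at most once, namely as 1 + a supremum
   of the above kind, and all finite labels above its layer I have strictly smaller potential
   |Pi - I| n + #{vertices of layer I with unsatisfied owner and finite label}. By induction a
   finite label of potential P is below (n + 1)^(1 + P), and P <= p n + n yields
   c <= p (n + 1)^(1 + p n + n) <= n^((n + 3)(p + 2)). The ordering J and the index l play no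
   role. *)

lemma XE_imp_XV: "wf_game G \<Longrightarrow> (x, y) \<in> XE G \<Longrightarrow> x \<in> XV G \<and> y \<in> XV G"
  unfolding wf_game_def XE_def XV_def by auto

lemma XE_snd_subset: "(x, y) \<in> XE G \<Longrightarrow> snd x \<subseteq> snd y"
  unfolding XE_def by auto

lemma XV_snd_subset: "x \<in> XV G \<Longrightarrow> snd x \<subseteq> players G"
  unfolding XV_def by auto

lemma is_play_XV: "wf_game G \<Longrightarrow> is_play G \<rho> \<Longrightarrow> \<rho> m \<in> XV G"
  unfolding is_play_def using XE_imp_XV by blast

lemma is_play_snd_mono: "is_play G \<rho> \<Longrightarrow> m \<le> m' \<Longrightarrow> snd (\<rho> m) \<subseteq> snd (\<rho> m')"
  using lift_Suc_mono_le[of "\<lambda>m. snd (\<rho> m)"] XE_snd_subset unfolding is_play_def by blast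

lemma costX_le: "i \<in> snd (\<sigma> t) \<Longrightarrow> costX i \<sigma> \<le> enat t"
  unfolding costX_def by (auto intro: Least_le)

lemma costX_le_enatD: "costX i \<sigma> \<le> enat L \<Longrightarrow> \<exists>t \<le> L. i \<in> snd (\<sigma> t)"
  unfolding costX_def by (auto split: if_splits intro: LeastI)

lemma costX_eq_infinity: "(\<And>m. i \<notin> snd (\<sigma> m)) \<Longrightarrow> costX i \<sigma> = \<infinity>"
  unfolding costX_def by auto

section \<open>Lasso plays\<close>

definition loop_index :: "nat \<Rightarrow> nat \<Rightarrow> nat \<Rightarrow> nat" where
  "loop_index p q m = (if m < p then m else p + (m - p) mod (q - p))"

lemma loop_index_less:
  assumes "p < q" shows "loop_index p q m < q"
proof -
  have "(m - p) mod (q - p) < q - p" using assms by simp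
  then have "p + (m - p) mod (q - p) < q" by linarith
  then show ?thesis using assms unfolding loop_index_def by auto
qed

lemma loop_index_prefix: "m \<le> p \<Longrightarrow> loop_index p q m = m"
  unfolding loop_index_def by auto

lemma loop_index_add:
  assumes "p < q" and "k \<le> q - loop_index p q m"
  shows "loop_index p q (m + k) =
           (if loop_index p q m + k = q then p else loop_index p q m + k)"
proof (cases "m < p")
  case True
  then have m: "loop_index p q m = m" by (simp add: loop_index_def)
  then have "m + k \<le> q" using assms True by simp
  then consider "m + k < p" | "p \<le> m + k" "m + k < q" | "m + k = q" by linarith
  then show ?thesis
  proof cases
    case 2
    then have "(m + k - p) mod (q - p) = m + k - p" by simp
    with 2 show ?thesis using m by (simp add: loop_index_def)
  qed (use m assms(1) in \<open>simp_all add: loop_index_def\<close>)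
next
  case False
  define r where "r = (m - p) mod (q - p)"
  have m: "loop_index p q m = p + r" using False by (simp add: loop_index_def r_def)
  have "r < q - p" using assms(1) unfolding r_def by simp
  then have rk: "r + k \<le> q - p" using assms(2) m by linarith
  have "m + k - p = (m - p) + k" using False by simp
  then have "(m + k - p) mod (q - p) = (r + k) mod (q - p)"
    unfolding r_def by (simp add: mod_add_left_eq)
  then have mk: "loop_index p q (m + k) = p + (r + k) mod (q - p)"
    using False by (simp add: loop_index_def)
  show ?thesis
  proof (cases "r + k = q - p")
    case True
    then show ?thesis using m mk assms(1) by simp
  next
    case False
    then have "(r + k) mod (q - p) = r + k" using rk by simp
    moreover have "loop_index p q m + k \<noteq> q" using False m assms(1) by linarith
    ultimately show ?thesis using m mk by simp
  qed
qed

lemma lasso_shift: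
  assumes "p < q" and "\<rho> p = \<rho> q" and "k \<le> q - loop_index p q m"
  shows "\<rho> (loop_index p q (m + k)) = \<rho> (loop_index p q m + k)"
  using loop_index_add[OF assms(1,3)] assms(2) by auto

lemma is_play_lasso:
  assumes "is_play G \<rho>" and "p < q" and "\<rho> p = \<rho> q"
  shows "is_play G (\<rho> \<circ> loop_index p q)"
  unfolding is_play_def
proof
  fix m
  have "\<rho> (loop_index p q (m + 1)) = \<rho> (loop_index p q m + 1)"
    using lasso_shift[OF assms(2,3), of 1 m] loop_index_less[OF assms(2), of m] by simp
  then show "((\<rho> \<circ> loop_index p q) m, (\<rho> \<circ> loop_index p q) (Suc m)) \<in> XE G"
    using assms(1) unfolding is_play_def by simp
qed

lemma play_repeats_vertex:
  assumes wf: "wf_game G" and play: "is_play G \<rho>"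
    and const: "\<And>m. s \<le> m \<Longrightarrow> m \<le> s + card (verts G) \<Longrightarrow> snd (\<rho> m) = snd (\<rho> s)"
  obtains p q where "s \<le> p" "p < q" "q \<le> s + card (verts G)" "\<rho> p = \<rho> q"
proof -
  let ?W = "{s..s + card (verts G)}"
  have "(\<lambda>m. fst (\<rho> m)) ` ?W \<subseteq> verts G"
    using is_play_XV[OF wf play] unfolding XV_def by (auto simp: mem_Times_iff)
  then have "card ((\<lambda>m. fst (\<rho> m)) ` ?W) \<le> card (verts G)"
    using wf unfolding wf_game_def by (intro card_mono) auto
  then have "card ((\<lambda>m. fst (\<rho> m)) ` ?W) < card ?W" by simp
  then have "\<not> inj_on (\<lambda>m. fst (\<rho> m)) ?W" by (rule pigeonhole)
  then obtain a b where ab: "a \<in> ?W" "b \<in> ?W" "a \<noteq> b" "fst (\<rho> a) = fst (\<rho> b)"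
    unfolding inj_on_def by blast
  moreover have "snd (\<rho> a) = snd (\<rho> s)" "snd (\<rho> b) = snd (\<rho> s)"
    using const[of a] const[of b] ab(1,2) by auto
  ultimately have "\<rho> (min a b) = \<rho> (max a b)" by (simp add: prod_eq_iff min_def max_def)
  then show thesis using ab(1-3) by (intro that[of "min a b" "max a b"]) auto
qed

definition labels_bounded :: "('p, 'v) game \<Rightarrow> (('p, 'v) xvert \<Rightarrow> enat) \<Rightarrow> 'p set \<Rightarrow> nat \<Rightarrow> bool" where
  "labels_bounded G lam I M \<longleftrightarrow>
     (\<forall>w \<in> XV G. I \<subseteq> snd w \<longrightarrow> owner G (fst w) \<notin> snd w \<longrightarrow> lam w \<noteq> \<infinity> \<longrightarrow> lam w \<le> enat M)"

lemma labels_bounded_mono: "labels_bounded G lam I M \<Longrightarrow> I \<subseteq> I' \<Longrightarrow> labels_bounded G lam I' M"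
  unfolding labels_bounded_def by blast

lemma consistent_lasso:
  assumes wf: "wf_game G" and play: "is_play G \<rho>" and cons: "consistent G lam \<rho>"
    and bounded: "labels_bounded G lam (snd (\<rho> 0)) M"
    and "p < q" and "\<rho> p = \<rho> q" and stable: "snd (\<rho> (q + M)) \<subseteq> snd (\<rho> q)"
  shows "consistent G lam (\<rho> \<circ> loop_index p q)"
  unfolding consistent_def
proof
  fix m
  define m0 where "m0 = loop_index p q m"
  define i where "i = owner G (fst (\<rho> m0))"
  have m0_less: "m0 < q" unfolding m0_def using loop_index_less[OF \<open>p < q\<close>] .
  have shift: "(\<rho> \<circ> loop_index p q) (m + k) = \<rho> (m0 + k)" if "k \<le> q - m0" for k
    using lasso_shift[OF \<open>p < q\<close> \<open>\<rho> p = \<rho> q\<close>] that unfolding m0_def by simp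
  show "costX (owner G (fst ((\<rho> \<circ> loop_index p q) m))) (\<lambda>k. (\<rho> \<circ> loop_index p q) (m + k))
          \<le> lam ((\<rho> \<circ> loop_index p q) m)"
  proof (cases "lam (\<rho> m0)")
    case (enat L)
    have "costX i (\<lambda>k. \<rho> (m0 + k)) \<le> lam (\<rho> m0)"
      using cons unfolding consistent_def i_def by blast
    then have "costX i (\<lambda>k. \<rho> (m0 + k)) \<le> enat L" using enat by simp
    then obtain t where t: "t \<le> L" "i \<in> snd (\<rho> (m0 + t))"
      by (blast dest: costX_le_enatD)
    \<comment> \<open>The promise made at \<open>\<rho> m0\<close> is kept by position \<open>m0 + t \<le> q + M\<close>; if that lies
        beyond the cycle, stability moves it back to \<open>q\<close>, which the lasso reaches.\<close>
    obtain k where k: "k \<le> t" "k \<le> q - m0" "i \<in> snd (\<rho> (m0 + k))"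
    proof (cases "t \<le> q - m0 \<or> i \<in> snd (\<rho> m0)")
      case True
      then show thesis
      proof
        assume "t \<le> q - m0"
        then show thesis using that[of t] t by blast
      next
        assume "i \<in> snd (\<rho> m0)"
        then show thesis using that[of 0] by simp
      qed
    next
      case False
      have "lam (\<rho> m0) \<le> enat M"
        using bounded[unfolded labels_bounded_def, rule_format, of "\<rho> m0"] False enat
          is_play_XV[OF wf play] is_play_snd_mono[OF play, of 0 m0] unfolding i_def by simp
      then have "m0 + t \<le> q + M" using enat t(1) m0_less by simp
      then have "snd (\<rho> (m0 + t)) \<subseteq> snd (\<rho> q)"
        using is_play_snd_mono[OF play] stable by blast
      then have "i \<in> snd (\<rho> (m0 + (q - m0)))" using t(2) m0_less by auto
      then show thesis using False by (intro that[of "q - m0"]) simp_all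
    qed
    have "costX i (\<lambda>k. (\<rho> \<circ> loop_index p q) (m + k)) \<le> enat k"
      using shift[of k] k by (intro costX_le) simp
    also have "enat k \<le> lam (\<rho> m0)" using enat t(1) k(1) by simp
    finally show ?thesis using shift[of 0] unfolding i_def by simp
  qed (simp add: m0_def)
qed

section \<open>Costs of consistent plays\<close>

lemma reached_players_grow:
  assumes wf: "wf_game G" and \<rho>: "\<rho> \<in> Lam G lam x"
    and bounded: "labels_bounded G lam (snd x) M"
    and reach: "\<forall>\<sigma> \<in> Lam G lam x. costX j \<sigma> \<noteq> \<infinity>"
    and j: "j \<notin> snd (\<rho> (s + card (verts G) + M))"
  shows "snd (\<rho> s) \<subset> snd (\<rho> (s + card (verts G) + M))"
proof (rule ccontr)
  let ?t = "s + card (verts G) + M"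
  have play: "is_play G \<rho>" and start: "\<rho> 0 = x" and cons: "consistent G lam \<rho>"
    using \<rho> unfolding Lam_def by auto
  assume "\<not> snd (\<rho> s) \<subset> snd (\<rho> ?t)"
  then have "snd (\<rho> s) = snd (\<rho> ?t)" using is_play_snd_mono[OF play, of s ?t] by auto
  then have const: "snd (\<rho> m) = snd (\<rho> s)" if "s \<le> m" "m \<le> ?t" for m
    using is_play_snd_mono[OF play, of s m] is_play_snd_mono[OF play, of m ?t] that
    by (intro subset_antisym) auto
  have "snd (\<rho> m) = snd (\<rho> s)" if "s \<le> m" "m \<le> s + card (verts G)" for m
    by (rule const) (use that in simp_all)
  then obtain p q where pq: "s \<le> p" "p < q" "q \<le> s + card (verts G)" "\<rho> p = \<rho> q"
    by (rule play_repeats_vertex[OF wf play])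
  have "snd (\<rho> (q + M)) \<subseteq> snd (\<rho> q)" using const[of q] const[of "q + M"] pq by simp
  then have "consistent G lam (\<rho> \<circ> loop_index p q)"
    using consistent_lasso[OF wf play cons _ pq(2,4)] bounded start by simp
  moreover have "is_play G (\<rho> \<circ> loop_index p q)" using is_play_lasso[OF play pq(2,4)] .
  moreover have "(\<rho> \<circ> loop_index p q) 0 = x" using start by (simp add: loop_index_prefix)
  ultimately have "\<rho> \<circ> loop_index p q \<in> Lam G lam x" unfolding Lam_def by simp
  moreover have "costX j (\<rho> \<circ> loop_index p q) = \<infinity>"
  proof (rule costX_eq_infinity)
    fix m
    have "loop_index p q m \<le> ?t" using loop_index_less[OF pq(2), of m] pq(3) by simp
    then show "j \<notin> snd ((\<rho> \<circ> loop_index p q) m)"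
      using is_play_snd_mono[OF play] j by auto
  qed
  ultimately show False using reach by blast
qed

lemma card_reached_players_grow:
  assumes wf: "wf_game G" and \<rho>: "\<rho> \<in> Lam G lam x"
    and bounded: "labels_bounded G lam (snd x) M"
    and reach: "\<forall>\<sigma> \<in> Lam G lam x. costX j \<sigma> \<noteq> \<infinity>"
  shows "j \<notin> snd (\<rho> (a * (card (verts G) + M))) \<Longrightarrow>
           card (snd x) + a \<le> card (snd (\<rho> (a * (card (verts G) + M))))"
proof (induction a)
  case 0
  then show ?case using \<rho> unfolding Lam_def by simp
next
  case (Suc a)
  let ?K = "card (verts G) + M"
  have play: "is_play G \<rho>" using \<rho> unfolding Lam_def by simp
  have "j \<notin> snd (\<rho> (a * ?K))"
    using Suc.prems is_play_snd_mono[OF play, of "a * ?K" "Suc a * ?K"] by auto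
  then have IH: "card (snd x) + a \<le> card (snd (\<rho> (a * ?K)))" by (rule Suc.IH)
  have "finite (snd (\<rho> (Suc a * ?K)))"
    using XV_snd_subset[OF is_play_XV[OF wf play]] wf unfolding wf_game_def
    by (meson finite_subset)
  moreover have "snd (\<rho> (a * ?K)) \<subset> snd (\<rho> (Suc a * ?K))"
    using reached_players_grow[OF wf \<rho> bounded reach, of "a * ?K"] Suc.prems
    by (simp add: add.assoc add.commute)
  ultimately have "card (snd (\<rho> (a * ?K))) < card (snd (\<rho> (Suc a * ?K)))"
    by (intro psubset_card_mono)
  with IH show ?case by simp
qed

lemma costX_le_if_all_reach:
  assumes wf: "wf_game G" and j: "j \<in> players G" and \<rho>: "\<rho> \<in> Lam G lam x"
    and bounded: "labels_bounded G lam (snd x) M"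
    and reach: "\<forall>\<sigma> \<in> Lam G lam x. costX j \<sigma> \<noteq> \<infinity>"
  shows "costX j \<rho> \<le> enat (card (players G - snd x) * (card (verts G) + M))"
proof -
  define d where "d = card (players G - snd x)"
  have play: "is_play G \<rho>" and start: "\<rho> 0 = x" using \<rho> unfolding Lam_def by auto
  have fin: "finite (players G)" using wf unfolding wf_game_def by simp
  have x_sub: "snd x \<subseteq> players G" using XV_snd_subset[OF is_play_XV[OF wf play, of 0]] start by simp
  have "j \<in> snd (\<rho> (d * (card (verts G) + M)))"
  proof (rule ccontr)
    let ?y = "\<rho> (d * (card (verts G) + M))"
    assume j_unsat: "j \<notin> snd ?y"
    then have "card (snd x) + d \<le> card (snd ?y)"
      using card_reached_players_grow[OF wf \<rho> bounded reach] by blast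
    moreover have "d = card (players G) - card (snd x)"
      unfolding d_def using x_sub finite_subset[OF x_sub fin] by (simp add: card_Diff_subset)
    moreover have "card (snd x) \<le> card (players G)" using x_sub fin by (rule card_mono[rotated])
    moreover have "card (snd ?y) < card (players G)"
      using XV_snd_subset[OF is_play_XV[OF wf play]] j_unsat j
      by (intro psubset_card_mono[OF fin]) blast
    ultimately show False by linarith
  qed
  then show ?thesis unfolding d_def by (rule costX_le)
qed

lemma Sup_costX_le:
  assumes wf: "wf_game G" and j: "j \<in> players G"
    and bounded: "labels_bounded G lam (snd x) M"
    and Sup: "Sup (costX j ` Lam G lam x) = enat c"
  shows "c \<le> card (players G - snd x) * (card (verts G) + M)"
proof -
  have "costX j \<sigma> \<le> enat c" if "\<sigma> \<in> Lam G lam x" for \<sigma>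
    using Sup_upper[of "costX j \<sigma>" "costX j ` Lam G lam x"] that Sup by simp
  then have "\<forall>\<sigma> \<in> Lam G lam x. costX j \<sigma> \<noteq> \<infinity>" by (metis enat_ord_simps(5) infinity_ileE)
  then have "Sup (costX j ` Lam G lam x) \<le> enat (card (players G - snd x) * (card (verts G) + M))"
    using costX_le_if_all_reach[OF wf j _ bounded] by (auto intro: Sup_least)
  then show ?thesis using Sup by simp
qed

section \<open>The labeling sequence\<close>

definition labeling :: "('p, 'v) game \<Rightarrow> (nat \<Rightarrow> 'p set) \<Rightarrow> nat \<Rightarrow> nat \<Rightarrow> ('p, 'v) xvert \<Rightarrow> enat" where
  "labeling G J N k = fst (labseq G J N k)"

definition layer :: "('p, 'v) game \<Rightarrow> (nat \<Rightarrow> 'p set) \<Rightarrow> nat \<Rightarrow> nat \<Rightarrow> nat" where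
  "layer G J N k = snd (labseq G J N k)"

definition succ_value :: "('p, 'v) game \<Rightarrow> (('p, 'v) xvert \<Rightarrow> enat) \<Rightarrow> ('p, 'v) xvert \<Rightarrow> enat" where
  "succ_value G lam u =
     1 + (INF u' \<in> {u'. (u, u') \<in> XE G}. Sup (costX (owner G (fst u)) ` Lam G lam u'))"

lemma labeling_0: "labeling G J N 0 = lab0 G"
  by (simp add: labeling_def)

lemma labeling_Suc:
  "labeling G J N (Suc k) u =
     (if u \<in> ge_set G J N (layer G J N k) \<and> u \<in> XV G then
        (if owner G (fst u) \<in> snd u then 0 else succ_value G (labeling G J N k) u)
      else labeling G J N k u)"
  by (simp add: labeling_def layer_def succ_value_def update_def Let_def)

lemma layer_Suc_le: "layer G J N (Suc k) \<le> layer G J N k"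
  by (simp add: layer_def Let_def)

lemma labeling_outside_layer:
  "u \<notin> ge_set G J N (layer G J N k) \<Longrightarrow> labeling G J N k u = lab0 G u"
proof (induction k)
  case 0
  then show ?case by (simp add: labeling_0)
next
  case (Suc k)
  have "ge_set G J N (layer G J N (Suc k)) \<supseteq> ge_set G J N (layer G J N k)"
    using layer_Suc_le[of G J N k] unfolding ge_set_def by fastforce
  with Suc show ?case by (auto simp: labeling_Suc)
qed

lemma Lam_mono: "(\<And>u. lam u \<le> lam' u) \<Longrightarrow> Lam G lam x \<subseteq> Lam G lam' x"
  unfolding Lam_def consistent_def using order_trans by blast

lemma succ_value_mono: "(\<And>u. lam u \<le> lam' u) \<Longrightarrow> succ_value G lam u \<le> succ_value G lam' u"
  unfolding succ_value_def
  by (intro add_left_mono INF_mono) (meson Lam_mono Sup_subset_mono image_mono order_refl)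

lemma labeling_Suc_le: "labeling G J N (Suc k) u \<le> labeling G J N k u"
proof (induction k arbitrary: u)
  case 0
  show ?case by (simp add: labeling_Suc labeling_0 lab0_def)
next
  case (Suc k)
  show ?case
  proof (cases "u \<in> ge_set G J N (layer G J N k)")
    case True
    then show ?thesis
      using succ_value_mono[of "labeling G J N (Suc k)" "labeling G J N k", OF Suc.IH]
      by (auto simp: labeling_Suc[of G J N "Suc k"] labeling_Suc[of G J N k])
  next
    case False
    then have "labeling G J N (Suc k) u = lab0 G u"
      by (simp add: labeling_Suc labeling_outside_layer)
    then show ?thesis by (auto simp: labeling_Suc[of G J N "Suc k"] lab0_def)
  qed
qed

lemma succ_value_le:
  assumes wf: "wf_game G" and u: "u \<in> XV G"
    and bounded: "labels_bounded G lam (snd u) M"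
    and a: "succ_value G lam u = enat a"
  shows "a \<le> 1 + card (players G - snd u) * (card (verts G) + M)"
proof -
  define j where "j = owner G (fst u)"
  define S where "S u' = Sup (costX j ` Lam G lam u')" for u'
  let ?U = "{u'. (u, u') \<in> XE G}"
  have j: "j \<in> players G" using wf u unfolding wf_game_def XV_def j_def by auto
  have "(INF u' \<in> ?U. S u') \<noteq> \<infinity>"
  proof
    assume "(INF u' \<in> ?U. S u') = \<infinity>"
    then show False using a unfolding succ_value_def S_def j_def by simp
  qed
  then obtain u0 where "u0 \<in> ?U" by (metis INF_empty ex_in_conv top_enat_def)
  then have "(INF u' \<in> ?U. S u') \<in> S ` ?U" by (intro wellorder_InfI[of "S u0"]) simp
  then obtain u' where u': "u' \<in> ?U" and attained: "(INF u' \<in> ?U. S u') = S u'" by blast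
  obtain c where c: "S u' = enat c"
    using \<open>(INF u' \<in> ?U. S u') \<noteq> \<infinity>\<close> attained by auto
  have "a = c + 1" using a attained c unfolding succ_value_def S_def j_def by (simp add: one_enat_def)
  moreover have "c \<le> card (players G - snd u') * (card (verts G) + M)"
  proof (rule Sup_costX_le[OF wf j])
    show "labels_bounded G lam (snd u') M"
      using labels_bounded_mono[OF bounded XE_snd_subset] u' by simp
    show "Sup (costX j ` Lam G lam u') = enat c" using c unfolding S_def .
  qed
  moreover have "card (players G - snd u') \<le> card (players G - snd u)"
    using XE_snd_subset[of u u'] u' wf unfolding wf_game_def by (intro card_mono) auto
  ultimately show ?thesis by (metis add.commute add_le_mono1 mult_le_mono1 order_trans)
qed

section \<open>Potential\<close>

definition finite_labels :: "('p, 'v) game \<Rightarrow> (('p, 'v) xvert \<Rightarrow> enat) \<Rightarrow> 'p set \<Rightarrow> 'v set" where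
  "finite_labels G lam I = {v \<in> verts G. owner G v \<notin> I \<and> lam (v, I) \<noteq> \<infinity>}"

definition potential :: "('p, 'v) game \<Rightarrow> (('p, 'v) xvert \<Rightarrow> enat) \<Rightarrow> 'p set \<Rightarrow> nat" where
  "potential G lam I = card (players G - I) * card (verts G) + card (finite_labels G lam I)"

lemma finite_labels_antimono:
  assumes "\<And>u. lam' u \<le> lam u"
  shows "finite_labels G lam I \<subseteq> finite_labels G lam' I"
proof -
  have "lam' u \<noteq> \<infinity>" if "lam u \<noteq> \<infinity>" for u
    using assms[of u] that by (metis enat_ord_simps(5))
  then show ?thesis unfolding finite_labels_def by blast
qed

lemma finite_finite_labels: "wf_game G \<Longrightarrow> finite (finite_labels G lam I)"
  unfolding finite_labels_def wf_game_def by simp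

lemma card_finite_labels_le: "wf_game G \<Longrightarrow> card (finite_labels G lam I) \<le> card (verts G)"
  unfolding finite_labels_def wf_game_def by (intro card_mono) auto

lemma potential_antimono:
  "wf_game G \<Longrightarrow> (\<And>u. lam' u \<le> lam u) \<Longrightarrow> potential G lam I \<le> potential G lam' I"
  unfolding potential_def by (simp add: card_mono finite_finite_labels finite_labels_antimono)

lemma potential_le:
  assumes wf: "wf_game G"
  shows "potential G lam I \<le> card (players G) * card (verts G) + card (verts G)"
proof -
  have "card (players G - I) \<le> card (players G)"
    using wf unfolding wf_game_def by (intro card_mono) auto
  then show ?thesis
    unfolding potential_def using card_finite_labels_le[OF wf] by (intro add_mono mult_le_mono1)
qed

lemma potential_less:
  assumes wf: "wf_game G" and "I \<subseteq> I'" and "I' \<subseteq> players G"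
    and more: "card (finite_labels G lam I) < card (finite_labels G lam' I)"
  shows "potential G lam I' < potential G lam' I"
proof (cases "I' = I")
  case True
  then show ?thesis using more unfolding potential_def by simp
next
  case False
  have fin: "finite (players G)" using wf unfolding wf_game_def by simp
  have "players G - I' \<subset> players G - I" using False assms(2,3) by blast
  then have "card (players G - I') < card (players G - I)" using fin by (simp add: psubset_card_mono)
  then have "card (players G - I') * card (verts G) + card (verts G) \<le> card (players G - I) * card (verts G)"
    by (metis Suc_leI mult_Suc mult_le_mono1 add.commute)
  then show ?thesis
    using card_finite_labels_le[OF wf, of lam I'] more unfolding potential_def by linarith
qed

definition potential_bounded :: "('p, 'v) game \<Rightarrow> (('p, 'v) xvert \<Rightarrow> enat) \<Rightarrow> bool" where
  "potential_bounded G lam \<longleftrightarrow>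
     (\<forall>u a. u \<in> XV G \<longrightarrow> owner G (fst u) \<notin> snd u \<longrightarrow> lam u = enat a \<longrightarrow>
        a + card (verts G) + 1 \<le> (card (verts G) + 1) ^ (1 + potential G lam (snd u)))"

lemma potential_bounded_lab0: "potential_bounded G (lab0 G)"
  unfolding potential_bounded_def lab0_def by simp

lemma new_label_le:
  assumes wf: "wf_game G" and bound: "potential_bounded G lam"
    and step: "\<And>u. lam' u \<le> lam u"
    and u: "u \<in> XV G" "owner G (fst u) \<notin> snd u" "lam u = \<infinity>" "lam' u = enat a"
    and val: "succ_value G lam u = enat a"
  shows "a + card (verts G) + 1 \<le> (card (verts G) + 1) ^ (1 + potential G lam' (snd u))"
proof -
  let ?n = "card (verts G)" and ?I = "snd u"
  define E where "E = potential G lam' ?I"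
  define M where "M = (?n + 1) ^ E - (?n + 1)"
  have "fst u \<in> finite_labels G lam' ?I - finite_labels G lam ?I"
    using u unfolding finite_labels_def XV_def by auto
  then have more: "card (finite_labels G lam ?I) < card (finite_labels G lam' ?I)"
    using finite_labels_antimono[of lam' lam, OF step] finite_finite_labels[OF wf]
    by (intro psubset_card_mono) auto
  have bounded: "labels_bounded G lam ?I M"
    unfolding labels_bounded_def
  proof (intro ballI impI)
    fix w assume w: "w \<in> XV G" "?I \<subseteq> snd w" "owner G (fst w) \<notin> snd w" "lam w \<noteq> \<infinity>"
    then obtain b where b: "lam w = enat b" by auto
    have "potential G lam (snd w) < E"
      unfolding E_def using potential_less[OF wf w(2) XV_snd_subset[OF w(1)] more] .
    then have "(?n + 1) ^ (1 + potential G lam (snd w)) \<le> (?n + 1) ^ E"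
      by (intro power_increasing) auto
    moreover have "b + ?n + 1 \<le> (?n + 1) ^ (1 + potential G lam (snd w))"
      using bound w(1,3) b unfolding potential_bounded_def by blast
    ultimately have "b \<le> M" unfolding M_def by linarith
    then show "lam w \<le> enat M" using b by simp
  qed
  have "1 \<le> E" using more unfolding E_def potential_def by linarith
  then have "?n + 1 \<le> (?n + 1) ^ E" using power_increasing[of 1 E "?n + 1"] by simp
  then obtain Q where Q: "(?n + 1) ^ E = ?n + 1 + Q" using le_Suc_ex by blast
  have "card (players G - ?I) \<le> ?n"
    using wf unfolding wf_game_def by (meson Diff_subset card_mono le_trans)
  have "M = Q" unfolding M_def Q by simp
  then have "a \<le> 1 + card (players G - ?I) * (?n + Q)"
    using succ_value_le[OF wf u(1) bounded val] by simp
  also have "\<dots> \<le> 1 + ?n * (?n + Q)"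
    using \<open>card (players G - ?I) \<le> ?n\<close> by (intro add_left_mono mult_le_mono1)
  finally have "a \<le> 1 + ?n * (?n + Q)" .
  moreover have "1 \<le> ?n" using wf unfolding wf_game_def by simp
  ultimately have "a + ?n + 1 \<le> (?n + 1) * (?n + 1) ^ E"
    unfolding Q by (simp add: algebra_simps)
  then show ?thesis unfolding E_def by simp
qed

lemma potential_bounded_step:
  assumes wf: "wf_game G" and bound: "potential_bounded G lam"
    and step: "\<And>u. lam' u \<le> lam u"
    and changed: "\<And>u. u \<in> XV G \<Longrightarrow> owner G (fst u) \<notin> snd u \<Longrightarrow>
                     lam' u = lam u \<or> lam' u = succ_value G lam u"
  shows "potential_bounded G lam'"
  unfolding potential_bounded_def
proof (intro allI impI)
  fix u a assume u: "u \<in> XV G" "owner G (fst u) \<notin> snd u" "lam' u = enat a"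
  let ?n = "card (verts G)"
  show "a + ?n + 1 \<le> (?n + 1) ^ (1 + potential G lam' (snd u))"
  proof (cases "lam u")
    case (enat b)
    have "a \<le> b" using step[of u] u(3) enat by simp
    moreover have "b + ?n + 1 \<le> (?n + 1) ^ (1 + potential G lam (snd u))"
      using bound u(1,2) enat unfolding potential_bounded_def by blast
    moreover have "(?n + 1) ^ (1 + potential G lam (snd u)) \<le> (?n + 1) ^ (1 + potential G lam' (snd u))"
      using potential_antimono[OF wf step] by (intro power_increasing) auto
    ultimately show ?thesis by linarith
  next
    case infinity
    then have "succ_value G lam u = enat a" using changed[OF u(1,2)] u(3) by auto
    with infinity show ?thesis using new_label_le[OF wf bound step u(1,2) infinity u(3)] by blast
  qed
qed

lemma potential_bounded_labeling:
  assumes wf: "wf_game G" shows "potential_bounded G (labeling G J N k)"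
proof (induction k)
  case 0
  show ?case by (simp add: labeling_0 potential_bounded_lab0)
next
  case (Suc k)
  show ?case
  proof (rule potential_bounded_step[OF wf Suc.IH labeling_Suc_le])
    fix u assume "owner G (fst u) \<notin> snd u"
    then show "labeling G J N (Suc k) u = labeling G J N k u \<or>
               labeling G J N (Suc k) u = succ_value G (labeling G J N k) u"
      by (simp add: labeling_Suc)
  qed
qed

lemma labels_bounded_labeling:
  assumes wf: "wf_game G"
  defines "n \<equiv> card (verts G)" and "p \<equiv> card (players G)"
  shows "labels_bounded G (labeling G J N k) I ((n + 1) ^ (1 + p * n + n) - (n + 1))"
  unfolding labels_bounded_def
proof (intro ballI impI)
  fix w assume w: "w \<in> XV G" "owner G (fst w) \<notin> snd w" "labeling G J N k w \<noteq> \<infinity>"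
  then obtain b where b: "labeling G J N k w = enat b" by auto
  have "(n + 1) ^ (1 + potential G (labeling G J N k) (snd w)) \<le> (n + 1) ^ (1 + p * n + n)"
    using potential_le[OF wf] unfolding n_def p_def by (intro power_increasing) auto
  moreover have "b + n + 1 \<le> (n + 1) ^ (1 + potential G (labeling G J N k) (snd w))"
    using potential_bounded_labeling[OF wf] w(1,2) b unfolding potential_bounded_def n_def by blast
  ultimately have "b \<le> (n + 1) ^ (1 + p * n + n) - (n + 1)" by linarith
  then show "labeling G J N k w \<le> enat ((n + 1) ^ (1 + p * n + n) - (n + 1))" using b by simp
qed

lemma Suc_power_self_le:
  fixes n :: nat assumes "n \<ge> 2" shows "(n + 1) ^ n \<le> n ^ (n + 2)"
proof -
  have n0: "real n > 0" using assms by simp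
  have "(1 + 1 / real n) ^ n \<le> exp (1 / real n) ^ n"
    using exp_ge_add_one_self n0 by (intro power_mono) (auto simp: less_imp_le)
  also have "exp (1 / real n) ^ n = exp 1"
    using n0 by (simp add: exp_of_nat_mult[symmetric])
  also have "\<dots> \<le> 3" by (rule exp_le)
  also have "(3::real) \<le> real n ^ 2"
    using power_mono[of 2 "real n" 2] assms by (simp add: power2_eq_square)
  finally have h: "(1 + 1 / real n) ^ n \<le> real n ^ 2" .
  have "real ((n + 1) ^ n) = real n ^ n * (1 + 1 / real n) ^ n"
    using n0 by (simp add: field_simps flip: power_mult_distrib)
  also have "\<dots> \<le> real n ^ n * real n ^ 2" using h by (intro mult_left_mono) auto
  also have "\<dots> = real (n ^ (n + 2))" by (simp add: power_add power2_eq_square)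
  finally show ?thesis by linarith
qed

lemma Suc_power_le_power:
  fixes n p :: nat assumes "n \<ge> 2"
  shows "(n + 1) ^ (2 + p * n + n) \<le> n ^ ((n + 3) * (p + 2))"
proof -
  have "(n + 1) ^ (2 + p * n + n) = (n + 1) ^ (n * (p + 1) + 2)"
    by (simp add: algebra_simps)
  also have "\<dots> = ((n + 1) ^ n) ^ (p + 1) * (n + 1) ^ 2"
    by (simp only: power_mult power_add)
  also have "\<dots> \<le> (n ^ (n + 2)) ^ (p + 1) * (n ^ 2) ^ 2"
  proof (intro mult_mono power_mono)
    show "(n + 1) ^ n \<le> n ^ (n + 2)" using Suc_power_self_le assms .
    have "n + 1 \<le> n * 2" using assms by simp
    also have "\<dots> \<le> n * n" using assms by (intro mult_left_mono) auto
    finally show "n + 1 \<le> n ^ 2" by (simp add: power2_eq_square)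
  qed auto
  also have "\<dots> = n ^ ((n + 2) * (p + 1) + 2 * 2)" by (simp only: power_mult power_add)
  also have "\<dots> \<le> n ^ ((n + 3) * (p + 2))"
    using assms by (intro power_increasing) (auto simp: algebra_simps)
  finally show ?thesis .
qed

theorem corollary3p13:
  "\<exists>C::nat. \<forall>(G :: (nat, nat) game) v0 J v l k i c.
     wf_game G \<and> v0 \<in> verts G \<and> valid_order G v0 J \<and>
     v \<in> XV G \<and> 1 \<le> l \<and> l \<le> card (Iset G v0) - 1 \<and> snd v = J l \<and>
     i \<in> players G \<and>
     Sup (costX i ` Lam G (fst (labseq G J (card (Iset G v0)) k)) v) = enat c
     \<longrightarrow> c \<le> C * card (verts G) ^ ((card (verts G) + 3) * (card (players G) + 2))"
proof (intro exI[of _ 1] allI impI, elim conjE)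
  fix G :: "(nat, nat) game" and v0 J v l k i c
  let ?N = "card (Iset G v0)" and ?n = "card (verts G)" and ?p = "card (players G)"
  let ?M = "(?n + 1) ^ (1 + ?p * ?n + ?n) - (?n + 1)"
  assume wf: "wf_game G" and i: "i \<in> players G"
    and Sup: "Sup (costX i ` Lam G (fst (labseq G J ?N k)) v) = enat c"
  have "c \<le> card (players G - snd v) * (?n + ?M)"
    using Sup_costX_le[OF wf i labels_bounded_labeling[OF wf]] Sup
    unfolding labeling_def by blast
  also have "\<dots> \<le> ?p * (?n + ?M)"
    using wf unfolding wf_game_def by (intro mult_le_mono1 card_mono) auto
  also have "\<dots> \<le> (?n + 1) * (?n + 1) ^ (1 + ?p * ?n + ?n)"
  proof (intro mult_le_mono)
    show "?p \<le> ?n + 1" using wf unfolding wf_game_def by simp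
    have "?n + 1 \<le> (?n + 1) ^ (1 + ?p * ?n + ?n)"
      using power_increasing[of 1 "1 + ?p * ?n + ?n" "?n + 1"] by simp
    then show "?n + ?M \<le> (?n + 1) ^ (1 + ?p * ?n + ?n)" by linarith
  qed
  also have "\<dots> = (?n + 1) ^ (2 + ?p * ?n + ?n)" by simp
  also have "\<dots> \<le> ?n ^ ((?n + 3) * (?p + 2))"
    using wf unfolding wf_game_def by (intro Suc_power_le_power) simp
  finally show "c \<le> 1 * ?n ^ ((?n + 3) * (?p + 2))" by simp
qed

end
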